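(* Let $k\ge4$, let $d_{\mathrm{ubd}}(k)=2^{k-1}k\log2$, and let $d_{\mathrm{lbd}}(4)=16.7$, $d_{\mathrm{lbd}}(k)=(2^{k-1}-2)k\log2$ for $k\ge5$. For $d\in[d_{\mathrm{lbd}}(k),d_{\mathrm{ubd}}(k)]$ let $x(k,d)$ be the unique solution of $\Psi_d(x)=x$ in $[\frac12-\frac1{2^k},\frac12]$ and $\Phi^\star(d)=\Phi_k(d,x(k,d))$. Then $d\mapsto\Phi^\star(d)$ is continuous on $[d_{\mathrm{lbd}}(k),d_{\mathrm{ubd}}(k)]$, $\Phi^\star(d_{\mathrm{lbd}}(k))>0$ and $\Phi^\star(d_{\mathrm{ubd}}(k))<0$.
   Context: $\hat\Psi(x)=\frac{1-2x^{k-1}}{1-x^{k-1}}$, $\dot\Psi(v)=\frac{1-v^{d-1}}{2-v^{d-1}}$, $\Psi_d=\dot\Psi\circ\hat\Psi$; $\Phi_k(d,x)=-\log(1-x)-d(1-k^{-1}-d^{-1})\log(1-2x^k)+(d-1)\log(1-x^{k-1})$. (Existence and uniqueness of $x(k,d)$ in this range is known.) *)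

theory Defs
  imports "HOL-Analysis.Analysis"
begin

definition Psi_hat :: "nat \<Rightarrow> real \<Rightarrow> real" where
  "Psi_hat k x = (1 - 2 * x ^ (k - 1)) / (1 - x ^ (k - 1))"

definition Psi_dot :: "real \<Rightarrow> real \<Rightarrow> real" where
  "Psi_dot d v = (1 - v powr (d - 1)) / (2 - v powr (d - 1))"

definition Psi :: "nat \<Rightarrow> real \<Rightarrow> real \<Rightarrow> real" where
  "Psi k d = Psi_dot d \<circ> Psi_hat k"

definition Phi :: "nat \<Rightarrow> real \<Rightarrow> real \<Rightarrow> real" where
  "Phi k d x = - ln (1 - x) - d * (1 - 1 / real k - 1 / d) * ln (1 - 2 * x ^ k)
     + (d - 1) * ln (1 - x ^ (k - 1))"

definition d_ubd :: "nat \<Rightarrow> real" where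
  "d_ubd k = 2 ^ (k - 1) * real k * ln 2"

definition d_lbd :: "nat \<Rightarrow> real" where
  "d_lbd k = (if k = 4 then 16.7 else (2 ^ (k - 1) - 2) * real k * ln 2)"

definition xfix :: "nat \<Rightarrow> real \<Rightarrow> real" where
  "xfix k d = (THE x. x \<in> {1/2 - 1/2^k .. 1/2} \<and> Psi k d x = x)"

definition Phi_star :: "nat \<Rightarrow> real \<Rightarrow> real" where
  "Phi_star k d = Phi k d (xfix k d)"

end

theory Submission
  imports Defs
begin

text \<open>
  Put \<open>ell t = ln ((1 - t) / (1 - 2 t))\<close> and \<open>a = x^(k-1)\<close>. Since
  \<open>Psi_hat k x = exp (- ell a)\<close>, a point \<open>x \<in> [1/2 - 2^-k, 1/2]\<close> is a fixed point of
  \<open>Psi k d\<close> iff \<open>x < 1/2\<close> and \<open>ell x / ell a = d - 1\<close>. Close to \<open>1/2\<close> this ratio is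
  continuous and strictly increasing, and the levels \<open>d_lbd k - 1\<close> and \<open>d_ubd k - 1\<close> lie between
  its values at \<open>1/2 - 2^-k\<close> and \<open>1/2 - 2^-k/64\<close>. Hence \<open>x(k,d)\<close> is its inverse evaluated at
  \<open>d - 1\<close>, which depends continuously on \<open>d\<close>.

  The signs come from comparing with \<open>x = 1/2\<close>, where
  \<open>Phi k d (1/2) = ln 2 + (d/k) ln (1 - 2^(1-k))\<close>. Within \<open>2^-k\<close> of \<open>1/2\<close> the \<open>x\<close>-derivative
  of \<open>Phi\<close> is at most \<open>2\<close>, so \<open>Phi_star (d_lbd k) \<ge> Phi (d_lbd k) (1/2) - 2^(1-k) > 0\<close>; and for
  \<open>d = d_ubd k\<close> the fixed point lies so close to \<open>1/2\<close> that \<open>Phi\<close> is increasing between them,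
  so \<open>Phi_star (d_ubd k) \<le> Phi (d_ubd k) (1/2) < 0\<close>. The numerical inequalities are checked
  directly for \<open>k = 4, 5\<close> and through bounds on \<open>k^j 2^-k\<close> for larger \<open>k\<close>.
\<close>

lemma ln_add_one_alternating_bound:
  fixes t :: real
  assumes "0 \<le> t"
  shows "0 \<le> (-1)^n * (ln (1 + t) - (\<Sum>i<n. (-1)^i * t^Suc i / Suc i))"
proof -
  let ?f = "\<lambda>t::real. (-1)^n * (ln (1 + t) - (\<Sum>i<n. (-1)^i * t^Suc i / Suc i))"
  have "?f 0 \<le> ?f t"
  proof (rule DERIV_nonneg_imp_nondecreasing[OF assms])
    fix x :: real assume x: "0 \<le> x" "x \<le> t"
    have monomial: "DERIV (\<lambda>t. (-1)^i * t^Suc i / Suc i) x :> (-x)^i" for i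
      using DERIV_cmult[OF DERIV_pow[of "Suc i" x], of "(-1)^i / Suc i"]
      by (simp add: power_minus' field_simps del: of_nat_Suc)
    have "DERIV (\<lambda>t. ln (1 + t)) x :> 1/(1+x)"
      using x by (auto intro!: derivative_eq_intros)
    then have "DERIV ?f x :> (-1)^n * (1/(1+x) - (\<Sum>i<n. (-x)^i))"
      by (intro DERIV_cmult DERIV_diff DERIV_sum monomial)
    moreover have "(1 + x) * (\<Sum>i<n. (-x)^i) = 1 - (-x)^n"
      using one_diff_power_eq[of "-x" n] by simp
    then have "1/(1+x) - (\<Sum>i<n. (-x)^i) = (-x)^n/(1+x)"
      using x by (simp add: field_simps)
    then have "(-1)^n * (1/(1+x) - (\<Sum>i<n. (-x)^i)) = x^n/(1+x)"
      by (simp flip: power_mult_distrib)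
    ultimately show "\<exists>y. DERIV ?f x :> y \<and> 0 \<le> y" using x by fastforce
  qed
  then show ?thesis by simp
qed

lemma ln_add_one_le_alternating_sum:
  fixes t :: real
  assumes "0 \<le> t" "odd n"
  shows "ln (1 + t) \<le> (\<Sum>i<n. (-1)^i * t^Suc i / Suc i)"
  using ln_add_one_alternating_bound[OF assms(1), of n] assms(2) by simp

lemma alternating_sum_le_ln_add_one:
  fixes t :: real
  assumes "0 \<le> t" "even n"
  shows "(\<Sum>i<n. (-1)^i * t^Suc i / Suc i) \<le> ln (1 + t)"
  using ln_add_one_alternating_bound[OF assms(1), of n] assms(2) by simp

lemma minus_ln_one_minus_le:
  fixes t :: real
  assumes "0 \<le> t" "t < 1"
  shows "- ln (1 - t) \<le> t + t^2 / (2 * (1 - t))"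
proof -
  let ?f = "\<lambda>t::real. t + t^2 / (2 * (1 - t)) + ln (1 - t)"
  have "?f 0 \<le> ?f t"
  proof (rule DERIV_nonneg_imp_nondecreasing[OF assms(1)])
    fix x :: real assume x: "0 \<le> x" "x \<le> t"
    have "1 - x \<noteq> 0" "2 - 2 * x \<noteq> 0" using x assms by auto
    then have "DERIV ?f x :> x^2 / (2 * (1 - x)^2)"
      using x assms by (auto intro!: derivative_eq_intros)
        (simp add: divide_simps power2_eq_square, simp add: algebra_simps)
    then show "\<exists>y. DERIV ?f x :> y \<and> 0 \<le> y" by fastforce
  qed
  then show ?thesis by simp
qed

lemma ln_2_ge: "0.688 \<le> ln (2::real)"
proof -
  have "ln (2::real) = ln (1 + 1/3) + ln (1 + 1/2)"
    using ln_mult[of "4/3::real" "3/2"] by simp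
  moreover have "(\<Sum>i<4. (-1)^i * (1/3)^Suc i / Suc i) \<le> ln (1 + 1/3::real)"
    "(\<Sum>i<4. (-1)^i * (1/2)^Suc i / Suc i) \<le> ln (1 + 1/2::real)"
    by (rule alternating_sum_le_ln_add_one; simp)+
  ultimately show ?thesis by (simp add: eval_nat_numeral)
qed

lemma ln_2_le: "ln (2::real) \<le> 0.6934"
proof -
  have "ln (2::real) = ln ((1 + 1/4)^3 * (1 + 3/125))" by (simp add: power_divide)
  also have "\<dots> = 3 * ln (1 + 1/4) + ln (1 + 3/125)" by (subst ln_mult_pos) (simp_all add: ln_realpow)
  finally have "ln (2::real) = 3 * ln (1 + 1/4) + ln (1 + 3/125)" .
  moreover have "ln (1 + 1/4::real) \<le> (\<Sum>i<5. (-1)^i * (1/4)^Suc i / Suc i)"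
    "ln (1 + 3/125::real) \<le> (\<Sum>i<3. (-1)^i * (3/125)^Suc i / Suc i)"
    by (rule ln_add_one_le_alternating_sum; simp)+
  ultimately show ?thesis by (simp add: eval_nat_numeral)
qed

lemma mult_half_power_le:
  fixes f :: "nat \<Rightarrow> real"
  assumes doubling: "\<And>n. k0 \<le> n \<Longrightarrow> f (Suc n) \<le> 2 * f n" and "k0 \<le> k"
  shows "f k * (1/2)^k \<le> f k0 * (1/2)^k0"
  using assms(2)
proof (induction k rule: nat_induct_at_least)
  case base
  then show ?case by simp
next
  case (Suc n)
  have "f (Suc n) * (1/2)^(Suc n) = (f (Suc n) / 2) * (1/2)^n" by simp
  also have "\<dots> \<le> f n * (1/2)^n" using doubling[OF Suc.hyps(1)] by (intro mult_right_mono) auto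
  finally show ?case using Suc.IH by linarith
qed

lemma half_power_bounds_4:
  assumes "k \<ge> 4"
  shows "(1/2::real)^k \<le> 1/16" "real k * (1/2)^k \<le> 1/4" "(real k - 1) * (1/2)^k \<le> 3/16"
    "(real k - 1) * (real k - 2) * (1/2)^k \<le> 3/8"
proof -
  have "(1/2::real)^k \<le> (1/2)^4" using assms by (intro power_decreasing) auto
  then show "(1/2::real)^k \<le> 1/16" by (simp add: power_divide)
  have "real k * (1/2)^k \<le> real 4 * (1/2)^4" by (rule mult_half_power_le[OF _ assms]) auto
  then show "real k * (1/2)^k \<le> 1/4" by (simp add: power_divide)
  have "(real k - 1) * (1/2)^k \<le> (real 4 - 1) * (1/2)^4" by (rule mult_half_power_le[OF _ assms]) auto
  then show "(real k - 1) * (1/2)^k \<le> 3/16" by (simp add: power_divide)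
  have "(real k - 1) * (real k - 2) * (1/2)^k \<le> (real 4 - 1) * (real 4 - 2) * (1/2)^4"
  proof (rule mult_half_power_le[OF _ assms])
    fix n :: nat assume "4 \<le> n"
    then have "0 \<le> (real n - 1) * (real n - 4)" by (intro mult_nonneg_nonneg) auto
    then show "(real (Suc n) - 1) * (real (Suc n) - 2) \<le> 2 * ((real n - 1) * (real n - 2))"
      by (simp add: algebra_simps)
  qed
  then show "(real k - 1) * (real k - 2) * (1/2)^k \<le> 3/8" by (simp add: power_divide)
qed

lemma half_power_bounds_5:
  assumes "k \<ge> 5"
  shows "(1/2::real)^k \<le> 1/32" "real k * (1/2)^k \<le> 5/32" "real k * (real k - 1) * (1/2)^k \<le> 5/8"
proof -
  have "(1/2::real)^k \<le> (1/2)^5" using assms by (intro power_decreasing) auto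
  then show "(1/2::real)^k \<le> 1/32" by (simp add: power_divide)
  have "real k * (1/2)^k \<le> real 5 * (1/2)^5" by (rule mult_half_power_le[OF _ assms]) auto
  then show "real k * (1/2)^k \<le> 5/32" by (simp add: power_divide)
  have "real k * (real k - 1) * (1/2)^k \<le> real 5 * (real 5 - 1) * (1/2)^5"
  proof (rule mult_half_power_le[OF _ assms])
    fix n :: nat assume "5 \<le> n"
    then have "0 \<le> real n * (real n - 3)" by (intro mult_nonneg_nonneg) auto
    then show "real (Suc n) * (real (Suc n) - 1) \<le> 2 * (real n * (real n - 1))"
      by (simp add: algebra_simps)
  qed
  then show "real k * (real k - 1) * (1/2)^k \<le> 5/8" by (simp add: power_divide)
qed

lemma half_power_bounds_6:
  assumes "k \<ge> 6"
  shows "(1/2::real)^k \<le> 1/64" "real k * (real k + 1) * (1/2)^k \<le> 21/32"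
proof -
  have "(1/2::real)^k \<le> (1/2)^6" using assms by (intro power_decreasing) auto
  then show "(1/2::real)^k \<le> 1/64" by (simp add: power_divide)
  have "real k * (real k + 1) * (1/2)^k \<le> real 6 * (real 6 + 1) * (1/2)^6"
  proof (rule mult_half_power_le[OF _ assms])
    fix n :: nat assume "6 \<le> n"
    then have "0 \<le> (real n + 1) * (real n - 2)" by (intro mult_nonneg_nonneg) auto
    then show "real (Suc n) * (real (Suc n) + 1) \<le> 2 * (real n * (real n + 1))"
      by (simp add: algebra_simps)
  qed
  then show "real k * (real k + 1) * (1/2)^k \<le> 21/32" by (simp add: power_divide)
qed

lemma half_power_pred:
  assumes "k \<ge> 1"
  shows "(y / 2::real)^(k - 1) = 2 * (1/2)^k * y^(k - 1)"
proof -
  obtain m where "k = Suc m" using assms by (cases k) auto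
  then show ?thesis by (simp add: power_divide power_one_over)
qed

lemma two_power_pred:
  assumes "k \<ge> 1"
  shows "(2::real)^(k - 1) = 1 / (2 * (1/2)^k)"
proof -
  obtain m where "k = Suc m" using assms by (cases k) auto
  then show ?thesis by (simp add: power_one_over)
qed

lemma ln_half_power: "ln ((1/2::real)^k) = - real k * ln 2"
  by (simp add: ln_realpow ln_div)

lemma ln_div_half_power: "0 < c \<Longrightarrow> ln (c / (1/2)^k) = ln c + real k * ln 2"
  by (simp add: ln_div ln_half_power)

lemma power_pred_bounds:
  fixes x :: real
  assumes "k \<ge> 4" "0 < x" "x \<le> 1/2"
  shows "0 < x^(k - 1)" "x^(k - 1) \<le> 2 * (1/2)^k" "x^(k - 1) \<le> 1/8"
proof -
  show "0 < x^(k - 1)" using assms by simp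
  have "x^(k - 1) \<le> (1/2)^(k - 1)" using assms by (intro power_mono) auto
  also have "(1/2::real)^(k - 1) = 2 * (1/2)^k" using half_power_pred[of k 1] assms by simp
  finally show "x^(k - 1) \<le> 2 * (1/2)^k" .
  then show "x^(k - 1) \<le> 1/8" using half_power_bounds_4(1)[OF assms(1)] by linarith
qed

section \<open>The fixed point equation\<close>

definition ell :: "real \<Rightarrow> real" where
  "ell t = ln (1 - t) - ln (1 - 2 * t)"

definition fixpoint_ratio :: "nat \<Rightarrow> real \<Rightarrow> real" where
  "fixpoint_ratio k x = ell x / ell (x^(k - 1))"

lemma ell_eq_ln_quotient: "t < 1/2 \<Longrightarrow> ell t = ln ((1 - t) / (1 - 2 * t))"
  unfolding ell_def by (simp add: ln_div)

lemma exp_minus_ell: "t < 1/2 \<Longrightarrow> exp (- ell t) = (1 - 2 * t) / (1 - t)"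
  by (simp add: ell_eq_ln_quotient exp_minus)

lemma ell_eq_ln_add_one: "t < 1/2 \<Longrightarrow> ell t = ln (1 + t / (1 - 2 * t))"
  by (simp add: ell_eq_ln_quotient field_simps)

lemma ell_lower:
  assumes "0 \<le> t" "t < 1/2"
  shows "t / (1 - t) \<le> ell t"
proof -
  have "ell t = - ln ((1 - 2 * t) / (1 - t))"
    using assms by (simp add: ell_def ln_div)
  also have "\<dots> \<ge> 1 - (1 - 2 * t) / (1 - t)"
    using ln_le_minus_one[of "(1 - 2 * t) / (1 - t)"] assms by simp
  also have "1 - (1 - 2 * t) / (1 - t) = t / (1 - t)"
    using assms by (simp add: field_simps)
  finally show ?thesis .
qed

lemma ell_upper:
  assumes "0 \<le> t" "t < 1/2"
  shows "ell t \<le> t / (1 - 2 * t)"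
  using ln_add_one_self_le_self[of "t / (1 - 2 * t)"] assms by (simp add: ell_eq_ln_add_one)

lemma ell_pos:
  assumes "0 < t" "t < 1/2"
  shows "0 < ell t"
proof -
  have "0 < t / (1 - t)" using assms by simp
  with ell_lower[of t] assms show ?thesis by linarith
qed

lemma ell_has_derivative: "t < 1/2 \<Longrightarrow> DERIV ell t :> 1 / ((1 - t) * (1 - 2 * t))"
  unfolding ell_def[abs_def] by (auto intro!: derivative_eq_intros) (simp add: divide_simps)

lemma ell_half_minus:
  assumes "0 < e"
  shows "ell (1/2 - e) = ln (1 + 2 * e) - ln (4 * e)"
proof -
  have "(1 - (1/2 - e)) / (1 - 2 * (1/2 - e)) = (1 + 2 * e) / (4 * e)"
    using assms by (simp add: field_simps)
  then show ?thesis using assms by (simp add: ell_eq_ln_quotient ln_div)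
qed

lemma ell_power_pred_half_minus_ge:
  assumes k: "k \<ge> 4" and e: "0 < e" "e < 1/2"
  shows "2 * (1/2)^k * (1 - 2 * (real k - 1) * e) \<le> ell ((1/2 - e)^(k - 1))"
proof -
  define a where "a = (1/2 - e)^(k - 1)"
  have a: "0 < a" "a \<le> 1/8" using power_pred_bounds[OF k, of "1/2 - e"] e by (auto simp: a_def)
  have "1 + real (k - 1) * (- 2 * e) \<le> (1 + (- 2 * e))^(k - 1)"
    using e by (intro Bernoulli_inequality) simp
  then have "2 * (1/2)^k * (1 - 2 * (real k - 1) * e) \<le> 2 * (1/2)^k * (1 - 2 * e)^(k - 1)"
    using k by (intro mult_left_mono) (auto simp: of_nat_diff algebra_simps)
  also have "\<dots> = ((1 - 2 * e) / 2)^(k - 1)" using half_power_pred[of k "1 - 2 * e"] k by simp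
  also have "\<dots> = a" by (simp add: a_def diff_divide_distrib)
  also have "a \<le> a / (1 - a)" using a by (simp add: field_simps)
  also have "\<dots> \<le> ell a" using ell_lower[of a] a by simp
  finally show ?thesis by (simp add: a_def)
qed

lemma Psi_fixed_point_iff:
  assumes k: "k \<ge> 4" and d: "d \<ge> 1" and z: "0 < z" "z \<le> 1/2"
  shows "Psi k d z = z \<longleftrightarrow> z < 1/2 \<and> fixpoint_ratio k z = d - 1"
proof -
  define a where "a = z^(k - 1)"
  have a: "0 < a" "a \<le> 1/8" using power_pred_bounds[OF k z] by (auto simp: a_def)
  define w where "w = exp (- (d - 1) * ell a)"
  have "Psi_hat k z = exp (- ell a)"
    using a by (simp add: Psi_hat_def exp_minus_ell a_def)
  then have Psi_eq: "Psi k d z = (1 - w) / (2 - w)"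
    by (simp add: Psi_def Psi_dot_def exp_powr_real w_def algebra_simps)
  have w: "0 < w" "w \<le> 1"
    using d ell_pos[of a] a by (auto simp: w_def mult_nonpos_nonneg)
  have ell_a: "ell a > 0" using ell_pos[of a] a by simp
  have "Psi k d z = z \<longleftrightarrow> w * (1 - z) = 1 - 2 * z"
    using w unfolding Psi_eq by (auto simp: divide_eq_eq algebra_simps)
  also have "\<dots> \<longleftrightarrow> z < 1/2 \<and> w = exp (- ell z)"
  proof (cases "z = 1/2")
    case True
    show ?thesis using w by (simp add: True)
  next
    case False
    then have "z < 1/2" using z by simp
    then show ?thesis by (simp add: exp_minus_ell eq_divide_eq)
  qed
  also have "\<dots> \<longleftrightarrow> z < 1/2 \<and> fixpoint_ratio k z = d - 1"
    unfolding fixpoint_ratio_def a_def[symmetric] using ell_a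
    by (auto simp: w_def field_simps)
  finally show ?thesis .
qed

lemma ell_power_pred_pos:
  assumes "k \<ge> 4" "0 < x" "x \<le> 1/2"
  shows "0 < ell (x^(k - 1))"
  using power_pred_bounds[OF assms] by (intro ell_pos) auto

lemma le_fixpoint_ratio_iff:
  assumes "k \<ge> 4" "0 < x" "x \<le> 1/2"
  shows "c \<le> fixpoint_ratio k x \<longleftrightarrow> c * ell (x^(k - 1)) \<le> ell x"
  using ell_power_pred_pos[OF assms] by (simp add: fixpoint_ratio_def pos_le_divide_eq)

lemma fixpoint_ratio_le_iff:
  assumes "k \<ge> 4" "0 < x" "x \<le> 1/2"
  shows "fixpoint_ratio k x \<le> c \<longleftrightarrow> ell x \<le> c * ell (x^(k - 1))"
  using ell_power_pred_pos[OF assms] by (simp add: fixpoint_ratio_def pos_divide_le_eq)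

lemma dist_half_mult_ell_le:
  assumes k: "k \<ge> 4" and x: "1/2 - (1/2)^k \<le> x" "x < 1/2"
  shows "(1/2 - x) * ell x \<le> 2 * ((1/2)^k)^2 + (real k - 2) * ln 2 * (1/2)^k"
proof -
  define q :: real where "q = (1/2)^k"
  define e where "e = 1/2 - x"
  define c where "c = (real k - 2) * ln 2"
  have q: "0 < q" "q \<le> 1/16" using half_power_bounds_4[OF k] by (auto simp: q_def)
  have e: "0 < e" "e \<le> q" using x by (auto simp: e_def q_def)
  have "2 * 0.688 \<le> (real k - 2) * ln (2::real)"
    using k ln_2_ge by (intro mult_mono) auto
  then have c: "1 \<le> c" by (simp add: c_def)
  have "ln (4 * e) = 2 * ln 2 + ln e" "ln (q / e) = - real k * ln 2 - ln e"
    using ln_realpow[of 2 2] e q by (simp_all add: ln_mult_pos ln_div q_def ln_half_power)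
  then have ell_x: "ell x = ln (1 + 2 * e) + c + ln (q / e)"
    using ell_half_minus[OF e(1)] by (simp add: e_def c_def algebra_simps)
  have "ln (1 + 2 * e) \<le> 2 * e" using e by (intro ln_add_one_self_le_self) simp
  moreover have "ln (q / e) \<le> q / e - 1" using e q by (intro ln_le_minus_one) simp
  ultimately have "e * ell x \<le> e * (2 * e + c + (q / e - 1))"
    using e unfolding ell_x by (intro mult_left_mono) auto
  also have "\<dots> = 2 * e * e + e * (c - 1) + q" using e by (simp add: field_simps)
  also have "\<dots> \<le> 2 * q * q + q * (c - 1) + q" using e c by (intro add_mono mult_mono) auto
  finally show ?thesis by (simp add: e_def q_def c_def power2_eq_square algebra_simps)
qed

text \<open>Together with \<open>ell a \<ge> a / (1 - a)\<close> for \<open>a = x^(k-1)\<close>, this makes the numerator of the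
  derivative of \<^term>\<open>fixpoint_ratio k\<close> positive.\<close>

lemma ell_near_half_estimate:
  assumes k: "k \<ge> 4" and x: "1/2 - (1/2)^k \<le> x" "x < 1/2"
  shows "(real k - 1) * ell x * ((1 - x) * (1 - 2 * x)) < x * (1 - 2 * x^(k - 1))"
proof -
  define q :: real where "q = (1/2)^k"
  define e where "e = 1/2 - x"
  have q: "0 < q" "q \<le> 1/16" "(real k - 1) * q \<le> 3/16" "(real k - 1) * (real k - 2) * q \<le> 3/8"
    using half_power_bounds_4[OF k] by (auto simp: q_def)
  have e: "0 < e" "e \<le> q" using x by (auto simp: e_def q_def)
  have x_ge: "7/16 \<le> x" using e q by (simp add: e_def)
  have ell_x: "0 \<le> ell x" using ell_pos[of x] x_ge x by simp
  have "(real k - 1) * ell x * ((1 - x) * (1 - 2 * x)) = (real k - 1) * (1 + 2 * e) * (e * ell x)"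
    by (simp add: e_def algebra_simps)
  also have "\<dots> \<le> (real k - 1) * (1 + 2 * q) * (2 * q^2 + (real k - 2) * ln 2 * q)"
    using dist_half_mult_ell_le[OF k x] e k ell_x by (intro mult_mono) (auto simp: e_def q_def)
  also have "\<dots> = (1 + 2 * q) * (2 * q * ((real k - 1) * q) + ((real k - 1) * (real k - 2) * q) * ln 2)"
    by (simp add: power2_eq_square algebra_simps)
  also have "\<dots> \<le> (1 + 2 * (1/16)) * (2 * (1/16) * (3/16) + (3/8) * 0.6934)"
  proof -
    have "0 \<le> (real k - 1) * q" "0 \<le> (real k - 1) * (real k - 2) * q" using k q by auto
    then show ?thesis using q ln_2_le by (intro mult_mono add_mono) auto
  qed
  also have "\<dots> < (7/16) * (3/4)" by simp
  also have "\<dots> \<le> x * (1 - 2 * x^(k - 1))"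
  proof (intro mult_mono)
    have "x^(k - 1) \<le> 2 * q" using power_pred_bounds[OF k, of x] x x_ge by (simp add: q_def)
    then show "3/4 \<le> 1 - 2 * x^(k - 1)" using q by simp
  qed (use x x_ge in auto)
  finally show ?thesis .
qed

lemma fixpoint_ratio_deriv_pos:
  assumes k: "k \<ge> 4" and x: "1/2 - (1/2)^k \<le> x" "x < 1/2"
  shows "\<exists>D. DERIV (fixpoint_ratio k) x :> D \<and> 0 < D"
proof -
  have x0: "0 < x" "x \<le> 1/2" using x half_power_bounds_4(1)[OF k] by auto
  define a where "a = x^(k - 1)"
  define p where "p = x^(k - 2)"
  have "k - 1 = Suc (k - 2)" using k by simp
  then have a_eq: "a = x * p" by (simp add: a_def p_def)
  have a: "0 < a" "a \<le> 1/8" using power_pred_bounds[OF k x0] by (auto simp: a_def)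
  have p: "0 < p" using x0 by (simp add: p_def)
  define A' where "A' = 1 / ((1 - x) * (1 - 2 * x))"
  define B' where "B' = (real k - 1) * p / ((1 - a) * (1 - 2 * a))"
  have dA: "DERIV ell x :> A'" using ell_has_derivative x by (simp add: A'_def)
  have dB: "DERIV (\<lambda>x. ell (x^(k - 1))) x :> B'"
    using DERIV_chain'[OF DERIV_pow[of "k - 1" x] ell_has_derivative] a k
    by (simp add: a_def B'_def p_def of_nat_diff numeral_2_eq_2)
  have ell_a: "0 < ell a" "a / (1 - a) \<le> ell a" using ell_pos[of a] ell_lower[of a] a by auto
  define D where "D = (1 - x) * (1 - 2 * x) * (1 - a) * (1 - 2 * a)"
  have D: "0 < D" using a x by (simp add: D_def)
  have nonzero: "1 - x \<noteq> 0" "1 - 2 * x \<noteq> 0" "1 - a \<noteq> 0" "1 - 2 * a \<noteq> 0" using a x by auto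
  have "ell x * B' = (real k - 1) * ell x * ((1 - x) * (1 - 2 * x)) * (p / D)"
    using nonzero by (simp add: B'_def D_def divide_simps)
  also have "\<dots> < x * (1 - 2 * a) * (p / D)"
    using ell_near_half_estimate[OF k x] p D unfolding a_def by (intro mult_strict_right_mono) auto
  also have "\<dots> = A' * (a / (1 - a))"
    using nonzero by (simp add: A'_def D_def a_eq divide_simps)
  also have "\<dots> \<le> A' * ell a"
    using ell_a x by (intro mult_left_mono) (auto simp: A'_def)
  finally have "0 < A' * ell a - ell x * B'" by simp
  moreover have "DERIV (fixpoint_ratio k) x :> (A' * ell a - ell x * B') / (ell a * ell a)"
    using DERIV_divide[OF dA dB] ell_a unfolding fixpoint_ratio_def[abs_def] a_def by simp
  ultimately show ?thesis using ell_a by (metis divide_pos_pos mult_pos_pos)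
qed

lemma fixpoint_ratio_strict_mono:
  assumes k: "k \<ge> 4" and "1/2 - (1/2)^k \<le> x" "x < y" "y < 1/2"
  shows "fixpoint_ratio k x < fixpoint_ratio k y"
  using assms(2-) fixpoint_ratio_deriv_pos[OF k]
  by (intro DERIV_pos_imp_increasing[OF assms(3)]) auto

lemma continuous_on_fixpoint_ratio:
  assumes k: "k \<ge> 4" and "M < 1/2"
  shows "continuous_on {1/2 - (1/2)^k .. M} (fixpoint_ratio k)"
proof (intro continuous_at_imp_continuous_on ballI)
  fix x assume "x \<in> {1/2 - (1/2)^k .. M}"
  then obtain D where "DERIV (fixpoint_ratio k) x :> D"
    using fixpoint_ratio_deriv_pos[OF k, of x] assms(2) by auto
  then show "isCont (fixpoint_ratio k) x" by (rule DERIV_isCont)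
qed

lemma xfix_eqI:
  assumes k: "k \<ge> 4" and d: "d \<ge> 1"
    and x: "1/2 - (1/2)^k \<le> x" "x < 1/2" "fixpoint_ratio k x = d - 1"
  shows "xfix k d = x"
proof -
  have "0 < 1/2 - (1/2::real)^k" using half_power_bounds_4(1)[OF k] by simp
  then have fixed_iff: "z \<in> {1/2 - 1/2^k .. 1/2} \<and> Psi k d z = z \<longleftrightarrow>
      1/2 - (1/2)^k \<le> z \<and> z < 1/2 \<and> fixpoint_ratio k z = d - 1" for z
  proof -
    have "1/2 - (1/2)^k \<le> z \<Longrightarrow> z \<le> 1/2 \<Longrightarrow>
        Psi k d z = z \<longleftrightarrow> z < 1/2 \<and> fixpoint_ratio k z = d - 1"
      using \<open>0 < 1/2 - (1/2)^k\<close> by (intro Psi_fixed_point_iff[OF k d]) auto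
    then show ?thesis by (auto simp: power_one_over)
  qed
  show ?thesis
    unfolding xfix_def
  proof (rule the_equality)
    show "x \<in> {1/2 - 1/2^k .. 1/2} \<and> Psi k d x = x" using fixed_iff x by blast
  next
    fix z assume "z \<in> {1/2 - 1/2^k .. 1/2} \<and> Psi k d z = z"
    then have z: "1/2 - (1/2)^k \<le> z" "z < 1/2" "fixpoint_ratio k z = d - 1"
      using fixed_iff by blast+
    show "z = x"
      using fixpoint_ratio_strict_mono[OF k, of z x] fixpoint_ratio_strict_mono[OF k, of x z] z x
      by (cases z x rule: linorder_cases) auto
  qed
qed

lemma xfix_bounds:
  assumes k: "k \<ge> 4" and d: "1 \<le> dl" "d \<in> {dl..du}"
    and M: "1/2 - (1/2)^k \<le> M" "M < 1/2"
    and lower: "fixpoint_ratio k (1/2 - (1/2)^k) \<le> dl - 1" and upper: "du - 1 \<le> fixpoint_ratio k M"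
  shows "1/2 - (1/2)^k \<le> xfix k d \<and> xfix k d \<le> M \<and> fixpoint_ratio k (xfix k d) = d - 1"
proof -
  obtain x where x: "1/2 - (1/2)^k \<le> x" "x \<le> M" "fixpoint_ratio k x = d - 1"
    using IVT'[of "fixpoint_ratio k" "1/2 - (1/2)^k" "d - 1" M] continuous_on_fixpoint_ratio[OF k M(2)]
      lower upper d M(1) by auto
  moreover have "xfix k d = x" using x d M by (intro xfix_eqI[OF k]) auto
  ultimately show ?thesis by simp
qed

lemma continuous_on_xfix:
  assumes k: "k \<ge> 4" and "1 \<le> dl"
    and M: "1/2 - (1/2)^k \<le> M" "M < 1/2"
    and "fixpoint_ratio k (1/2 - (1/2)^k) \<le> dl - 1" "du - 1 \<le> fixpoint_ratio k M"
  shows "continuous_on {dl..du} (xfix k)"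
proof -
  define S where "S = {1/2 - (1/2::real)^k .. M}"
  define g where "g = the_inv_into S (fixpoint_ratio k)"
  have "strict_mono_on S (fixpoint_ratio k)"
    using fixpoint_ratio_strict_mono[OF k] M by (intro strict_mono_onI) (auto simp: S_def)
  then have inj: "inj_on (fixpoint_ratio k) S" by (rule strict_mono_on_imp_inj_on)
  have g: "continuous_on (fixpoint_ratio k ` S) g"
    unfolding g_def using continuous_on_fixpoint_ratio[OF k M(2)] inj
    by (intro continuous_on_inv_into) (auto simp: S_def)
  have xfix: "xfix k d \<in> S" "fixpoint_ratio k (xfix k d) = d - 1" if "d \<in> {dl..du}" for d
    using xfix_bounds[OF k _ that M] assms by (auto simp: S_def)
  have image: "(\<lambda>d. d - 1) ` {dl..du} \<subseteq> fixpoint_ratio k ` S"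
  proof (rule image_subsetI)
    fix d assume "d \<in> {dl..du}"
    then show "d - 1 \<in> fixpoint_ratio k ` S" using xfix by (intro image_eqI[of _ _ "xfix k d"]) auto
  qed
  have "continuous_on {dl..du} (\<lambda>d. g (d - 1))"
    by (rule continuous_on_compose2[OF g _ image]) (intro continuous_intros)
  then show ?thesis
  proof (rule continuous_on_eq)
    fix d assume "d \<in> {dl..du}"
    then show "g (d - 1) = xfix k d"
      using the_inv_into_f_f[OF inj xfix(1)] xfix(2) by (simp add: g_def)
  qed
qed

section \<open>The derivative of Phi\<close>

text \<open>The derivative of \<^term>\<open>Phi k d\<close> in \<open>x\<close>, with \<open>a = x^(k-1)\<close>, regrouped so that the
  only term depending on \<open>d\<close> carries the sign of \<open>2 x - 1\<close>.\<close>

definition Phi_deriv :: "nat \<Rightarrow> real \<Rightarrow> real \<Rightarrow> real" where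
  "Phi_deriv k d x = (let a = x^(k - 1) in
     1 / (1 - x) + d * (real k - 1) * a * (2 * x - 1) / (x * (1 - a) * (1 - 2 * x * a))
     - 2 * real k * a / (1 - 2 * x * a) + (real k - 1) * a / (x * (1 - a)))"

lemma Phi_has_derivative:
  assumes k: "k \<ge> 4" and d: "d \<noteq> 0" and x: "0 < x" "x \<le> 1/2"
  shows "DERIV (Phi k d) x :> Phi_deriv k d x"
proof -
  define a where "a = x^(k - 1)"
  have a: "0 < a" "a \<le> 1/8" using power_pred_bounds[OF k x] by (auto simp: a_def)
  have "k = Suc (k - 1)" "k - 1 = Suc (k - 2)" using k by auto
  then have "x^k = x * a" "x * x^(k - 2) = a" unfolding a_def by (metis power_Suc)+
  then have x_power: "x^k = x * a" "x^(k - 2) = a / x" using x by (auto simp: field_simps)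
  have "x * a \<le> 1/16" using a x mult_mono[of x "1/2" a "1/8"] by simp
  then have "x^(k - 1) < 1" "2 * x^(k - 1) < 1" "2 * x^k < 1"
    using a by (simp_all add: a_def x_power)
  then have "DERIV (Phi k d) x :> 1 / (1 - x)
      + d * (1 - 1 / real k - 1 / d) * (2 * (real k * x^(k - 1))) / (1 - 2 * x^k)
      - (d - 1) * ((real k - 1) * x^(k - 2)) / (1 - x^(k - 1))"
    unfolding Phi_def[abs_def] using x k
    by (auto intro!: derivative_eq_intros) (simp add: numeral_2_eq_2 algebra_simps of_nat_diff)
  moreover have "d * (1 - 1 / real k - 1 / d) = (d * (real k - 1) - real k) / real k"
    using d k by (simp add: field_simps)
  moreover have "x \<noteq> 0" "1 - x \<noteq> 0" "1 - a \<noteq> 0" "1 - 2 * (x * a) \<noteq> 0" "real k \<noteq> 0"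
    using \<open>x * a \<le> 1/16\<close> a x k by auto
  ultimately show ?thesis
    unfolding Phi_deriv_def Let_def a_def[symmetric] x_power using d
    by (simp add: divide_simps) (simp add: algebra_simps)
qed

lemma Phi_deriv_le_two:
  assumes k: "k \<ge> 4" and d: "d \<ge> 0" and x: "1/2 - (1/2)^k \<le> x" "x \<le> 1/2"
  shows "Phi_deriv k d x \<le> 2"
proof -
  define q :: real where "q = (1/2)^k"
  have q: "0 < q" "q \<le> 1/16" "real k * q \<le> 1/4" using half_power_bounds_4[OF k] by (auto simp: q_def)
  have x0: "0 < x" using x q by (simp add: q_def)
  define a where "a = x^(k - 1)"
  have a: "0 < a" "a \<le> 2 * q" "a \<le> 1/8" using power_pred_bounds[OF k x0 x(2)] by (auto simp: a_def q_def)
  have xa: "x * a \<le> 1/16" using a x mult_mono[of x "1/2" a "1/8"] by simp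
  have "1 / (1 - x) \<le> 2" using x by (simp add: field_simps)
  moreover have "d * (real k - 1) * a * (2 * x - 1) / (x * (1 - a) * (1 - 2 * x * a)) \<le> 0"
  proof (rule divide_nonpos_pos)
    show "d * (real k - 1) * a * (2 * x - 1) \<le> 0" using d k a x by (intro mult_nonneg_nonpos) auto
    show "0 < x * (1 - a) * (1 - 2 * x * a)" using x0 a xa by simp
  qed
  moreover have "(real k - 1) * a / (x * (1 - a)) \<le> 2 * real k * a / (1 - 2 * x * a)"
  proof -
    have "(real k - 1) * (1 - 2 * x * a) \<le> real k - 1" using k x0 a by (simp add: mult_left_le)
    also have "\<dots> \<le> real k * (1 - 4 * q)" using q by (simp add: algebra_simps)
    also have "\<dots> \<le> real k * ((1 - 2 * q) * (1 - 2 * q))"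
      using q by (intro mult_left_mono) (auto simp: algebra_simps)
    also have "\<dots> \<le> real k * ((2 * x) * (1 - a))"
      using q a x unfolding q_def by (intro mult_left_mono mult_mono) auto
    finally have *: "(real k - 1) * (1 - 2 * x * a) \<le> 2 * real k * x * (1 - a)" by simp
    have nonzero: "x \<noteq> 0" "1 - a \<noteq> 0" "1 - 2 * x * a \<noteq> 0" using x0 a xa by auto
    have "(real k - 1) * a / (x * (1 - a)) = ((real k - 1) * (1 - 2 * x * a)) * a / (x * (1 - a) * (1 - 2 * x * a))"
      using nonzero by (simp add: divide_simps)
    also have "\<dots> \<le> (2 * real k * x * (1 - a)) * a / (x * (1 - a) * (1 - 2 * x * a))"
      using * a x0 xa by (intro divide_right_mono mult_right_mono) auto
    also have "\<dots> = 2 * real k * a / (1 - 2 * x * a)" using nonzero by (simp add: divide_simps)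
    finally show ?thesis .
  qed
  ultimately show ?thesis unfolding Phi_deriv_def Let_def a_def[symmetric] by linarith
qed

lemma Phi_deriv_lower_bound:
  assumes k: "k \<ge> 4" and d: "d \<ge> 0" and x: "0 < X0" "X0 \<le> x" "x \<le> 1/2" "1/2 - x \<le> E"
    and A0: "x^(k - 1) \<le> A0" "A0 \<le> 1/8"
  shows "1 / (1/2 + E) - d * (real k - 1) * A0 * (2 * E) / (X0 * (1 - A0) * (1 - A0))
      - 2 * real k * A0 / (1 - A0) \<le> Phi_deriv k d x"
proof -
  define a where "a = x^(k - 1)"
  have x0: "0 < x" using x by simp
  have a: "0 < a" "a \<le> A0" using power_pred_bounds[OF k x0 x(3)] A0 by (auto simp: a_def)
  have "2 * x * a \<le> a" using a x mult_right_mono[of "2 * x" 1 a] by simp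
  then have xa: "2 * x * a \<le> A0" using a by linarith
  have "1 / (1/2 + E) \<le> 1 / (1 - x)" using x by (intro divide_left_mono) auto
  moreover have "d * (real k - 1) * a * (1 - 2 * x) / (x * (1 - a) * (1 - 2 * x * a))
      \<le> d * (real k - 1) * A0 * (2 * E) / (X0 * (1 - A0) * (1 - A0))"
  proof (rule frac_le)
    show "0 \<le> d * (real k - 1) * A0 * (2 * E)" using d k a x by simp
    show "d * (real k - 1) * a * (1 - 2 * x) \<le> d * (real k - 1) * A0 * (2 * E)"
      using d k a x by (intro mult_mono mult_left_mono) auto
    show "0 < X0 * (1 - A0) * (1 - A0)" using x A0 by simp
    show "X0 * (1 - A0) * (1 - A0) \<le> x * (1 - a) * (1 - 2 * x * a)"
      using x a A0 xa by (intro mult_mono) auto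
  qed
  moreover have sign: "d * (real k - 1) * a * (2 * x - 1) / (x * (1 - a) * (1 - 2 * x * a))
      = - (d * (real k - 1) * a * (1 - 2 * x) / (x * (1 - a) * (1 - 2 * x * a)))"
    unfolding minus_divide_left by (intro arg_cong2[where f = "(/)"]) (simp_all add: algebra_simps)
  moreover have "2 * real k * a / (1 - 2 * x * a) \<le> 2 * real k * A0 / (1 - A0)"
    using a A0 xa k by (intro frac_le) auto
  moreover have "0 \<le> (real k - 1) * a / (x * (1 - a))" using k a x0 A0 by simp
  ultimately show ?thesis unfolding Phi_deriv_def Let_def a_def[symmetric] sign by linarith
qed

lemma Phi_half:
  assumes k: "k \<ge> 4" and d: "d \<noteq> 0"
  shows "Phi k d (1/2) = ln 2 + d / real k * ln (1 - 2 * (1/2)^k)"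
proof -
  have "(1/2::real)^(k - 1) = 2 * (1/2)^k" using half_power_pred[of k 1] k by simp
  then have "Phi k d (1/2) = ln 2 + ln (1 - 2 * (1/2)^k) * (- d * (1 - 1 / real k - 1 / d) + (d - 1))"
    unfolding Phi_def by (simp add: ln_div algebra_simps)
  also have "- d * (1 - 1 / real k - 1 / d) + (d - 1) = d / real k" using d k by (simp add: field_simps)
  finally show ?thesis by simp
qed

lemma Phi_ge_Phi_half:
  assumes k: "k \<ge> 4" and d: "d \<ge> 1" and x: "1/2 - (1/2)^k \<le> x" "x \<le> 1/2"
  shows "Phi k d (1/2) - 2 * (1/2 - x) \<le> Phi k d x"
proof -
  have "(1/2::real)^k \<le> 1/16" by (rule half_power_bounds_4(1)[OF k])
  let ?f = "\<lambda>x. Phi k d x - 2 * x"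
  have "?f (1/2) \<le> ?f x"
  proof (rule DERIV_nonpos_imp_nonincreasing[OF x(2)])
    fix y assume y: "x \<le> y" "y \<le> 1/2"
    have "0 < y" using x y \<open>(1/2::real)^k \<le> 1/16\<close> by linarith
    then have "DERIV ?f y :> Phi_deriv k d y - 2"
      using Phi_has_derivative[OF k _ _ y(2), of d] d by (auto intro!: derivative_eq_intros)
    moreover have "Phi_deriv k d y \<le> 2" using Phi_deriv_le_two[OF k _ _ y(2), of d] d x y by auto
    ultimately show "\<exists>D. DERIV ?f y :> D \<and> D \<le> 0" by fastforce
  qed
  then show ?thesis by simp
qed

lemma Phi_le_Phi_half:
  assumes k: "k \<ge> 4" and d: "d \<ge> 1" and x: "0 < x" "x \<le> 1/2"
    and deriv_nonneg: "\<And>y. x \<le> y \<Longrightarrow> y \<le> 1/2 \<Longrightarrow> 0 \<le> Phi_deriv k d y"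
  shows "Phi k d x \<le> Phi k d (1/2)"
proof (rule DERIV_nonneg_imp_nondecreasing[OF x(2)])
  fix y assume y: "x \<le> y" "y \<le> 1/2"
  then have "DERIV (Phi k d) y :> Phi_deriv k d y"
    using Phi_has_derivative[OF k _ _ y(2), of d] d x by auto
  then show "\<exists>D. DERIV (Phi k d) y :> D \<and> 0 \<le> D" using deriv_nonneg[OF y] by blast
qed

lemma continuous_on_Phi_comp:
  assumes k: "k \<ge> 4" and g: "continuous_on D g"
    and range: "\<And>d. d \<in> D \<Longrightarrow> d \<noteq> 0 \<and> 0 < g d \<and> g d \<le> 1/2"
  shows "continuous_on D (\<lambda>d. Phi k d (g d))"
  unfolding Phi_def
proof (intro continuous_intros g ballI)
  fix d assume "d \<in> D"
  then have d: "d \<noteq> 0" "0 < g d" "g d \<le> 1/2" using range by auto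
  have "g d ^ (k - 1) \<le> 1/8" using power_pred_bounds[OF k d(2,3)] by simp
  moreover have "g d ^ k \<le> g d ^ (k - 1)" using d k by (intro power_decreasing) auto
  ultimately show "1 - g d \<noteq> 0" "d \<noteq> 0" "1 - 2 * g d ^ k \<noteq> 0" "1 - g d ^ (k - 1) \<noteq> 0"
    using d by linarith+
qed

section \<open>Estimates at the endpoints\<close>

lemma d_ubd_eq: "k \<ge> 1 \<Longrightarrow> d_ubd k = real k * ln 2 / (2 * (1/2)^k)"
  unfolding d_ubd_def by (subst two_power_pred) simp_all

lemma d_lbd_eq:
  assumes "k \<ge> 5"
  shows "d_lbd k = real k * ln 2 * (1 - 4 * (1/2)^k) / (2 * (1/2)^k)"
proof -
  define q :: real where "q = (1/2)^k"
  have "d_lbd k = (1 / (2 * q) - 2) * real k * ln 2"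
    unfolding d_lbd_def q_def using assms by (subst two_power_pred) simp_all
  moreover have "0 < q" by (simp add: q_def)
  ultimately have "d_lbd k = real k * ln 2 * (1 - 4 * q) / (2 * q)" by (simp add: field_simps)
  then show ?thesis by (simp only: q_def)
qed

lemma d_lbd_bounds:
  assumes k: "k \<ge> 4"
  shows "1 \<le> d_lbd k" "d_lbd k \<le> d_ubd k"
proof -
  show "d_lbd k \<le> d_ubd k"
  proof (cases "k = 4")
    case True
    then show ?thesis using ln_2_ge by (simp add: d_lbd_def d_ubd_def)
  qed (simp add: d_lbd_def d_ubd_def algebra_simps)
  show "1 \<le> d_lbd k"
  proof (cases "k = 4")
    case False
    then have "(2::real)^4 \<le> 2^(k - 1)" "5 \<le> real k" using k by (intro power_increasing, auto)+
    then have "14 * 5 * 0.688 \<le> (2^(k - 1) - 2) * real k * ln (2::real)"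
      using ln_2_ge by (intro mult_mono) auto
    then show ?thesis using False by (simp add: d_lbd_def)
  qed (simp add: d_lbd_def)
qed

lemma d_ubd_le_fixpoint_ratio:
  assumes k: "k \<ge> 4"
  shows "d_ubd k - 1 \<le> fixpoint_ratio k (1/2 - (1/2)^k / 64)"
proof -
  define q :: real where "q = (1/2)^k"
  have q: "0 < q" "q \<le> 1/16" "real k * q \<le> 1/4" using half_power_bounds_4[OF k] by (auto simp: q_def)
  define M where "M = 1/2 - q/64"
  have M: "0 < M" "M < 1/2" using q by (auto simp: M_def)
  have d_ubd: "d_ubd k = real k * ln 2 / (2 * q)" using k by (simp add: d_ubd_eq q_def)
  have "4 * 0.688 / (2 * (1/16)) \<le> real k * ln 2 / (2 * q)"
    using k ln_2_ge q by (intro frac_le mult_mono) auto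
  then have d_ubd_ge: "1 \<le> d_ubd k" by (simp add: d_ubd)
  have "ell M = ln (1 + q/32) - ln (q/16)" using ell_half_minus[of "q/64"] q by (simp add: M_def)
  also have "\<dots> \<ge> - ln (q/16)" using q by simp
  also have "- ln (q/16) = (real k + 4) * ln 2"
    using ln_div_half_power[of 16 k] ln_realpow[of 2 4] q by (simp add: q_def ln_div algebra_simps)
  finally have ell_M: "(real k + 4) * ln 2 \<le> ell M" .
  have a: "0 < M^(k - 1)" "M^(k - 1) \<le> 2 * q"
    using power_pred_bounds[OF k M(1)] M by (auto simp: q_def)
  have "ell (M^(k - 1)) \<le> M^(k - 1) / (1 - 2 * M^(k - 1))"
    using ell_upper[of "M^(k - 1)"] a q by simp
  also have "\<dots> \<le> 2 * q / (1 - 4 * q)" using a q by (intro frac_le) auto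
  finally have ell_a: "ell (M^(k - 1)) \<le> 2 * q / (1 - 4 * q)" .
  have "(d_ubd k - 1) * ell (M^(k - 1)) \<le> d_ubd k * ell (M^(k - 1))"
    using ell_power_pred_pos[OF k M(1)] M by simp
  also have "\<dots> \<le> d_ubd k * (2 * q / (1 - 4 * q))"
    using ell_a d_ubd_ge by (intro mult_left_mono) auto
  also have "\<dots> = real k * ln 2 / (1 - 4 * q)" using q by (simp add: d_ubd field_simps)
  also have "\<dots> \<le> (real k + 4) * ln 2"
  proof -
    have "real k \<le> (real k + 4) * (1 - 4 * q)" using q by (simp add: algebra_simps)
    then have "real k * ln 2 \<le> (real k + 4) * ln 2 * (1 - 4 * q)"
      using ln_2_ge by (simp add: mult_right_mono mult.commute mult.left_commute)
    then show ?thesis using q by (simp add: divide_le_eq)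
  qed
  also have "\<dots> \<le> ell M" by (rule ell_M)
  finally show ?thesis using le_fixpoint_ratio_iff[OF k M(1)] M by (simp add: M_def q_def)
qed

lemma Phi_half_d_ubd_neg:
  assumes k: "k \<ge> 4"
  shows "Phi k (d_ubd k) (1/2) < 0"
proof -
  define q :: real where "q = (1/2)^k"
  have q: "0 < q" "q \<le> 1/16" using half_power_bounds_4[OF k] by (auto simp: q_def)
  have d_ubd: "d_ubd k = real k * ln 2 / (2 * q)" using k by (simp add: d_ubd_eq q_def)
  then have "d_ubd k \<noteq> 0" using q k by simp
  then have "Phi k (d_ubd k) (1/2) = ln 2 + ln 2 / (2 * q) * ln (1 - 2 * q)"
    using Phi_half[OF k] k by (simp add: d_ubd q_def)
  also have "\<dots> < ln 2 + ln 2 / (2 * q) * (- 2 * q)"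
    using ln_diff_less[of "1 - 2 * q" 1] q by (intro add_strict_left_mono mult_strict_left_mono) auto
  also have "\<dots> = 0" using q by simp
  finally show ?thesis .
qed

text \<open>This inequality holds with a margin below \<open>10^-3\<close>, so it needs the sharp bound
  \<open>ln 2 \<le> 0.6934\<close> and several terms of the logarithm series.\<close>

lemma fixpoint_ratio_left_end_le_d_lbd_4: "fixpoint_ratio 4 (1/2 - (1/2)^4) \<le> d_lbd 4 - 1"
proof -
  have "ell (1/2 - 1/16) = ln (1 + 1/8) + 2 * ln 2"
    using ell_half_minus[of "1/16"] ln_realpow[of 2 2] by (simp add: ln_div)
  moreover have "ln (1 + 1/8::real) \<le> (\<Sum>i<3. (-1)^i * (1/8)^Suc i / Suc i)"
    by (rule ln_add_one_le_alternating_sum) auto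
  moreover have "ell ((1/2 - 1/16)^(4 - 1)) = ln (1 + 343/3410)"
    by (simp add: ell_eq_ln_add_one power_divide)
  moreover have "(\<Sum>i<4. (-1)^i * (343/3410)^Suc i / Suc i) \<le> ln (1 + 343/3410::real)"
    by (rule alternating_sum_le_ln_add_one) auto
  ultimately have "ell (1/2 - 1/16) \<le> (d_lbd 4 - 1) * ell ((1/2 - 1/16)^(4 - 1))"
    using ln_2_le by (simp add: d_lbd_def eval_nat_numeral power_divide)
  then show ?thesis using fixpoint_ratio_le_iff[of 4 "1/2 - 1/16"] by (simp add: power_divide)
qed

lemma fixpoint_ratio_left_end_le_d_lbd_5: "fixpoint_ratio 5 (1/2 - (1/2)^5) \<le> d_lbd 5 - 1"
proof -
  have "ell (1/2 - 1/32) = ln (1 + 1/16) + 3 * ln 2"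
    using ell_half_minus[of "1/32"] ln_realpow[of 2 3] by (simp add: ln_div)
  also have "\<dots> \<le> 1/16 + 3 * ln 2" using ln_add_one_self_le_self[of "1/16"] by simp
  also have "\<dots> \<le> (70 * ln 2 - 1) * (13/250)" using ln_2_ge by simp
  also have "\<dots> \<le> (70 * ln 2 - 1) * ell ((1/2 - 1/32)^(5 - 1))"
  proof (rule mult_left_mono)
    have "ell ((1/2 - 1/32)^(5 - 1)) = ln (1 + 50625/947326)"
      by (simp add: ell_eq_ln_add_one power_divide)
    then show "13/250 \<le> ell ((1/2 - 1/32)^(5 - 1))"
      using alternating_sum_le_ln_add_one[of "50625/947326" 2] by (simp add: eval_nat_numeral)
  qed (use ln_2_ge in simp)
  also have "70 * ln 2 - 1 = d_lbd 5 - 1" by (simp add: d_lbd_def)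
  finally show ?thesis using fixpoint_ratio_le_iff[of 5 "1/2 - 1/32"] by (simp add: power_divide)
qed

lemma fixpoint_ratio_le_d_ubd_4: "fixpoint_ratio 4 (1/2 - (1/2)^4 / 4) \<le> d_ubd 4 - 1"
proof -
  have "ell (1/2 - 1/64) = ln (1 + 1/32) + 4 * ln 2"
    using ell_half_minus[of "1/64"] ln_realpow[of 2 4] by (simp add: ln_div)
  also have "\<dots> \<le> 1/32 + 4 * ln 2" using ln_add_one_self_le_self[of "1/32"] by simp
  also have "\<dots> \<le> (32 * ln 2 - 1) * (681/5000)" using ln_2_ge by simp
  also have "\<dots> \<le> (32 * ln 2 - 1) * ell ((1/2 - 1/64)^(4 - 1))"
  proof (rule mult_left_mono)
    have "ell ((1/2 - 1/64)^(4 - 1)) = ln (1 + 29791/202562)"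
      by (simp add: ell_eq_ln_add_one power_divide)
    then show "681/5000 \<le> ell ((1/2 - 1/64)^(4 - 1))"
      using alternating_sum_le_ln_add_one[of "29791/202562" 2] by (simp add: eval_nat_numeral)
  qed (use ln_2_ge in simp)
  also have "32 * ln 2 - 1 = d_ubd 4 - 1" by (simp add: d_ubd_def)
  finally show ?thesis using fixpoint_ratio_le_iff[of 4 "1/2 - 1/64"] by (simp add: power_divide)
qed

lemma Phi_deriv_d_ubd_nonneg_4:
  assumes x: "1/2 - (1/2)^4 / 4 \<le> x" "x \<le> 1/2"
  shows "0 \<le> Phi_deriv 4 (d_ubd 4) x"
proof -
  have d_ubd: "d_ubd 4 = 32 * ln 2" by (simp add: d_ubd_def)
  have x0: "31/64 \<le> x" using x by (simp add: power_divide)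
  have "x^(4 - 1) \<le> 1/8" using power_pred_bounds[of 4 x] x0 x by simp
  then have "1 / (1/2 + 1/64) - d_ubd 4 * (real 4 - 1) * (1/8) * (2 * (1/64)) / ((31/64) * (1 - 1/8) * (1 - 1/8))
      - 2 * real 4 * (1/8) / (1 - 1/8) \<le> Phi_deriv 4 (d_ubd 4) x"
    using x x0 ln_2_ge by (intro Phi_deriv_lower_bound) (auto simp: d_ubd)
  then show ?thesis using ln_2_le by (simp add: d_ubd)
qed

lemma Phi_half_d_lbd_gt_4: "2 * (1/2)^4 < Phi 4 (d_lbd 4) (1/2)"
proof -
  have "Phi 4 (d_lbd 4) (1/2) = ln 2 + 16.7 / 4 * ln (1 - 2 * (1/2)^4)"
    using Phi_half[of 4 "d_lbd 4"] by (simp add: d_lbd_def)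
  also have "ln (1 - 2 * (1/2)^4::real) = - ln (1 + 1/7)"
    by (simp add: power_divide ln_div)
  finally have "Phi 4 (d_lbd 4) (1/2) = ln 2 - 16.7 / 4 * ln (1 + 1/7)" by simp
  moreover have "ln (1 + 1/7::real) \<le> (\<Sum>i<3. (-1)^i * (1/7)^Suc i / Suc i)"
    by (rule ln_add_one_le_alternating_sum) auto
  ultimately show ?thesis using ln_2_ge by (simp add: eval_nat_numeral power_divide)
qed

lemma fixpoint_ratio_left_end_le_d_lbd_ge_6:
  assumes k: "k \<ge> 6"
  shows "fixpoint_ratio k (1/2 - (1/2)^k) \<le> d_lbd k - 1"
proof -
  define q :: real where "q = (1/2)^k"
  have k4: "k \<ge> 4" using k by simp
  have q: "0 < q" "q \<le> 1/64" "real k * (real k + 1) * q \<le> 21/32" "(real k - 1) * q \<le> 3/16"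
    using half_power_bounds_6[OF k] half_power_bounds_4[OF k4] by (auto simp: q_def)
  define L where "L = 1/2 - q"
  have L: "0 < L" "L \<le> 1/2" using q by (auto simp: L_def)
  have d_lbd: "d_lbd k = real k * ln 2 * (1 - 4 * q) / (2 * q)" using k by (simp add: d_lbd_eq q_def)
  have "ell L = ln (1 + 2 * q) + (real k - 2) * ln 2"
    using ell_half_minus[OF q(1)] ln_div_half_power[of "1/4" k] ln_realpow[of 2 2] q
    by (simp add: L_def q_def ln_div algebra_simps)
  also have "\<dots> \<le> 2 * q + (real k - 2) * ln 2" using ln_add_one_self_le_self[of "2 * q"] q by simp
  finally have ell_L: "ell L \<le> 2 * q + (real k - 2) * ln 2" .
  define K where "K = real k * ln 2 * (1 - 4 * q) - 2 * q"
  have "1 * 0.5 * (1/2) \<le> real k * ln 2 * (1 - 4 * q)" using k ln_2_ge q by (intro mult_mono) auto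
  then have K: "0 \<le> K" using q by (simp add: K_def)
  have d_lbd_K: "(d_lbd k - 1) * (2 * q) = K" using q by (simp add: d_lbd K_def field_simps)
  then have "d_lbd k - 1 = K / (2 * q)" using q by (simp add: eq_divide_eq)
  then have "0 \<le> d_lbd k - 1" using K q by simp
  then have "(d_lbd k - 1) * (2 * q * (1 - 2 * (real k - 1) * q)) \<le> (d_lbd k - 1) * ell (L^(k - 1))"
    using ell_power_pred_half_minus_ge[OF k4 q(1)] q by (intro mult_left_mono) (auto simp: L_def q_def)
  moreover have "(d_lbd k - 1) * (2 * q * (1 - 2 * (real k - 1) * q)) = K * (1 - 2 * (real k - 1) * q)"
    using d_lbd_K by (simp add: mult.assoc)
  moreover have "real k * ln 2 * (1 - 2 * (real k + 1) * q) - 2 * q \<le> K * (1 - 2 * (real k - 1) * q)"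
  proof -
    have "1 - 2 * (real k + 1) * q \<le> (1 - 4 * q) * (1 - 2 * (real k - 1) * q)"
      using q k by (simp add: algebra_simps)
    then have "real k * ln 2 * (1 - 2 * (real k + 1) * q) \<le> real k * ln 2 * ((1 - 4 * q) * (1 - 2 * (real k - 1) * q))"
      using ln_2_ge by (intro mult_left_mono) auto
    moreover have "2 * q * (1 - 2 * (real k - 1) * q) \<le> 2 * q" using q k by (simp add: mult_left_le)
    ultimately show ?thesis by (simp add: K_def algebra_simps)
  qed
  moreover have "ln 2 * (real k * (real k + 1) * q) \<le> ln 2 * (21/32)"
    using q ln_2_ge by (intro mult_left_mono) auto
  ultimately have "ell L \<le> (d_lbd k - 1) * ell (L^(k - 1))"
    using ell_L q ln_2_ge by (simp add: algebra_simps)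
  then show ?thesis using fixpoint_ratio_le_iff[OF k4 L] by (simp add: L_def q_def)
qed

lemma fixpoint_ratio_le_d_ubd_ge_5:
  assumes k: "k \<ge> 5"
  shows "fixpoint_ratio k (1/2 - (1/2)^k / 2) \<le> d_ubd k - 1"
proof -
  define q :: real where "q = (1/2)^k"
  have k4: "k \<ge> 4" using k by simp
  have q: "0 < q" "q \<le> 1/32" "real k * (real k - 1) * q \<le> 5/8" "(real k - 1) * q \<le> 3/16"
    using half_power_bounds_5[OF k] half_power_bounds_4[OF k4] by (auto simp: q_def)
  define L where "L = 1/2 - q/2"
  have L: "0 < L" "L \<le> 1/2" using q by (auto simp: L_def)
  have d_ubd: "d_ubd k = real k * ln 2 / (2 * q)" using k by (simp add: d_ubd_eq q_def)
  have "ell L = ln (1 + q) + (real k - 1) * ln 2"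
    using ell_half_minus[of "q/2"] ln_div_half_power[of "1/2" k] q
    by (simp add: L_def q_def ln_div algebra_simps)
  also have "\<dots> \<le> q + (real k - 1) * ln 2" using ln_add_one_self_le_self[of q] q by simp
  finally have ell_L: "ell L \<le> q + (real k - 1) * ln 2" .
  define K where "K = real k * ln 2 - 2 * q"
  have "1 * 0.5 \<le> real k * ln 2" using k ln_2_ge by (intro mult_mono) auto
  then have K: "0 \<le> K" using q by (simp add: K_def)
  have d_ubd_K: "(d_ubd k - 1) * (2 * q) = K" using q by (simp add: d_ubd K_def field_simps)
  then have "d_ubd k - 1 = K / (2 * q)" using q by (simp add: eq_divide_eq)
  then have "0 \<le> d_ubd k - 1" using K q by simp
  then have "(d_ubd k - 1) * (2 * q * (1 - 2 * (real k - 1) * (q/2))) \<le> (d_ubd k - 1) * ell (L^(k - 1))"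
    using ell_power_pred_half_minus_ge[OF k4, of "q/2"] q by (intro mult_left_mono) (auto simp: L_def q_def)
  moreover have "(d_ubd k - 1) * (2 * q * (1 - 2 * (real k - 1) * (q/2))) = K * (1 - (real k - 1) * q)"
    by (simp add: d_ubd_K[symmetric] algebra_simps)
  moreover have "real k * ln 2 - ln 2 * (real k * (real k - 1) * q) - 2 * q \<le> K * (1 - (real k - 1) * q)"
  proof -
    have "2 * q * (1 - (real k - 1) * q) \<le> 2 * q" using q k by (simp add: mult_left_le)
    then show ?thesis by (simp add: K_def algebra_simps)
  qed
  moreover have "ln 2 * (real k * (real k - 1) * q) \<le> ln 2 * (5/8)"
    using q ln_2_ge by (intro mult_left_mono) auto
  ultimately have "ell L \<le> (d_ubd k - 1) * ell (L^(k - 1))"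
    using ell_L q ln_2_ge by (simp add: algebra_simps)
  then show ?thesis using fixpoint_ratio_le_iff[OF k4 L] by (simp add: L_def q_def)
qed

lemma Phi_deriv_d_ubd_nonneg_ge_5:
  assumes k: "k \<ge> 5" and x: "1/2 - (1/2)^k / 2 \<le> x" "x \<le> 1/2"
  shows "0 \<le> Phi_deriv k (d_ubd k) x"
proof -
  define q :: real where "q = (1/2)^k"
  have k4: "k \<ge> 4" using k by simp
  have q: "0 < q" "q \<le> 1/32" "real k * (real k - 1) * q \<le> 5/8" "real k * q \<le> 5/32"
    using half_power_bounds_5[OF k] by (auto simp: q_def)
  have d_ubd: "d_ubd k = real k * ln 2 / (2 * q)" using k by (simp add: d_ubd_eq q_def)
  have x0: "0 < x" using x q by (simp add: q_def)
  have "x^(k - 1) \<le> 2 * q" "2 * q \<le> 1/8" using power_pred_bounds[OF k4 x0 x(2)] q by (auto simp: q_def)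
  then have "1 / (1/2 + q/2) - d_ubd k * (real k - 1) * (2 * q) * (2 * (q/2)) / ((1/2 - q/2) * (1 - 2 * q) * (1 - 2 * q))
      - 2 * real k * (2 * q) / (1 - 2 * q) \<le> Phi_deriv k (d_ubd k) x"
    using x q by (intro Phi_deriv_lower_bound[OF k4]) (auto simp: d_ubd q_def)
  also have "d_ubd k * (real k - 1) * (2 * q) * (2 * (q/2)) = ln 2 * (real k * (real k - 1) * q)"
    using q by (simp add: d_ubd field_simps)
  finally have "1 / (1/2 + q/2) - ln 2 * (real k * (real k - 1) * q) / ((1/2 - q/2) * (1 - 2 * q) * (1 - 2 * q))
      - 2 * real k * (2 * q) / (1 - 2 * q) \<le> Phi_deriv k (d_ubd k) x" .
  moreover have "1 / (1/2 + 1/64) \<le> 1 / (1/2 + q/2)" using q by (intro divide_left_mono) auto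
  moreover have "ln 2 * (real k * (real k - 1) * q) / ((1/2 - q/2) * (1 - 2 * q) * (1 - 2 * q))
      \<le> (0.6934 * (5/8)) / ((31/64) * (15/16) * (15/16))"
  proof (rule frac_le)
    have "0 \<le> real k * (real k - 1) * q" using k q by simp
    then show "ln 2 * (real k * (real k - 1) * q) \<le> 0.6934 * (5/8)"
      using q ln_2_le by (intro mult_mono) auto
    show "(31/64) * (15/16) * (15/16) \<le> (1/2 - q/2) * (1 - 2 * q) * (1 - 2 * q)"
      using q by (intro mult_mono) auto
  qed simp_all
  moreover have "2 * real k * (2 * q) / (1 - 2 * q) \<le> 4 * (5/32) / (15/16)"
    using q by (intro frac_le) auto
  ultimately show ?thesis by simp
qed

lemma Phi_half_d_lbd_gt_ge_5:
  assumes k: "k \<ge> 5"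
  shows "2 * (1/2)^k < Phi k (d_lbd k) (1/2)"
proof -
  define q :: real where "q = (1/2)^k"
  have k4: "k \<ge> 4" using k by simp
  have q: "0 < q" "q \<le> 1/32" using half_power_bounds_5[OF k] by (auto simp: q_def)
  have d_lbd: "d_lbd k = real k * ln 2 * (1 - 4 * q) / (2 * q)" using k by (simp add: d_lbd_eq q_def)
  have "2 * (1 - 2 * q) < (86/125) * (3 - 4 * q)" using q by simp
  also have "\<dots> \<le> ln 2 * (3 - 4 * q)" using ln_2_ge q by (intro mult_right_mono) auto
  finally have "q * (2 * (1 - 2 * q)) < q * (ln 2 * (3 - 4 * q))" using q by simp
  then have "2 * q < ln 2 * (q * (3 - 4 * q) / (1 - 2 * q))"
    using q by (simp add: field_simps)
  also have "\<dots> = ln 2 - ln 2 * (1 - 4 * q) / (2 * q) * (2 * q + (2 * q)^2 / (2 * (1 - 2 * q)))"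
    using q by (simp add: field_simps power2_eq_square)
  also have "\<dots> \<le> ln 2 - ln 2 * (1 - 4 * q) / (2 * q) * (- ln (1 - 2 * q))"
    using minus_ln_one_minus_le[of "2 * q"] q ln_2_ge by (intro diff_left_mono mult_left_mono) auto
  also have "\<dots> = Phi k (d_lbd k) (1/2)"
  proof -
    have "d_lbd k \<noteq> 0" using q k ln_2_ge by (simp add: d_lbd)
    then show ?thesis using Phi_half[OF k4] k by (simp add: d_lbd q_def)
  qed
  finally show ?thesis by (simp add: q_def)
qed

lemma fixpoint_ratio_left_end_le_d_lbd:
  assumes "k \<ge> 4"
  shows "fixpoint_ratio k (1/2 - (1/2)^k) \<le> d_lbd k - 1"
proof -
  consider "k = 4" | "k = 5" | "k \<ge> 6" using assms by linarith
  then show ?thesis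
    using fixpoint_ratio_left_end_le_d_lbd_4 fixpoint_ratio_left_end_le_d_lbd_5
      fixpoint_ratio_left_end_le_d_lbd_ge_6
    by cases auto
qed

lemma Phi_half_d_lbd_gt:
  assumes "k \<ge> 4"
  shows "2 * (1/2)^k < Phi k (d_lbd k) (1/2)"
  using Phi_half_d_lbd_gt_4 Phi_half_d_lbd_gt_ge_5[of k] assms by (cases "k = 4") auto

lemma Phi_deriv_d_ubd_nonneg_near_half:
  assumes k: "k \<ge> 4"
  obtains x1 where "1/2 - (1/2)^k \<le> x1" "x1 < 1/2" "fixpoint_ratio k x1 \<le> d_ubd k - 1"
    "\<And>x. x1 \<le> x \<Longrightarrow> x \<le> 1/2 \<Longrightarrow> 0 \<le> Phi_deriv k (d_ubd k) x"
proof (cases "k = 4")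
  case True
  show ?thesis
    by (rule that[of "1/2 - (1/2)^4 / 4"])
      (use fixpoint_ratio_le_d_ubd_4 Phi_deriv_d_ubd_nonneg_4 True in auto)
next
  case False
  then have "k \<ge> 5" using k by simp
  show ?thesis
    by (rule that[of "1/2 - (1/2)^k / 2"])
      (use fixpoint_ratio_le_d_ubd_ge_5 Phi_deriv_d_ubd_nonneg_ge_5 \<open>k \<ge> 5\<close> in auto)
qed

lemma Phi_d_lbd_pos:
  assumes k: "k \<ge> 4" and x: "1/2 - (1/2)^k \<le> x" "x \<le> 1/2"
  shows "0 < Phi k (d_lbd k) x"
proof -
  have "2 * (1/2 - x) \<le> 2 * (1/2)^k" using x by simp
  then show ?thesis using Phi_ge_Phi_half[OF k d_lbd_bounds(1)[OF k] x] Phi_half_d_lbd_gt[OF k] by linarith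
qed

lemma Phi_d_ubd_neg:
  assumes k: "k \<ge> 4"
    and x: "1/2 - (1/2)^k \<le> x" "x < 1/2" "fixpoint_ratio k x = d_ubd k - 1"
  shows "Phi k (d_ubd k) x < 0"
proof -
  obtain x1 where x1: "1/2 - (1/2)^k \<le> x1" "x1 < 1/2" "fixpoint_ratio k x1 \<le> d_ubd k - 1"
    and deriv_nonneg: "\<And>y. x1 \<le> y \<Longrightarrow> y \<le> 1/2 \<Longrightarrow> 0 \<le> Phi_deriv k (d_ubd k) y"
    using Phi_deriv_d_ubd_nonneg_near_half[OF k] by blast
  have "x1 \<le> x" using fixpoint_ratio_strict_mono[OF k x(1), of x1] x1 x by force
  then have "Phi k (d_ubd k) x \<le> Phi k (d_ubd k) (1/2)"
    using Phi_le_Phi_half[OF k _ _ _ deriv_nonneg] d_lbd_bounds[OF k] x half_power_bounds_4(1)[OF k]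
    by force
  with Phi_half_d_ubd_neg[OF k] show ?thesis by linarith
qed

theorem lemma3p2:
  fixes k :: nat
  assumes "k \<ge> 4"
  shows "continuous_on {d_lbd k .. d_ubd k} (Phi_star k)
         \<and> Phi_star k (d_lbd k) > 0
         \<and> Phi_star k (d_ubd k) < 0"
proof -
  note k = assms
  define M :: real where "M = 1/2 - (1/2)^k / 64"
  have M: "1/2 - (1/2)^k \<le> M" "M < 1/2" using half_power_bounds_4(1)[OF k] by (auto simp: M_def)
  note d_lbd = d_lbd_bounds[OF k]
  note ends = fixpoint_ratio_left_end_le_d_lbd[OF k] d_ubd_le_fixpoint_ratio[OF k, folded M_def]
  have xfix: "1/2 - (1/2)^k \<le> xfix k d \<and> xfix k d < 1/2 \<and> fixpoint_ratio k (xfix k d) = d - 1"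
    if "d \<in> {d_lbd k .. d_ubd k}" for d
    using xfix_bounds[OF k d_lbd(1) that M ends] M(2) by auto
  have "continuous_on {d_lbd k .. d_ubd k} (Phi_star k)"
    unfolding Phi_star_def using xfix half_power_bounds_4(1)[OF k] d_lbd
    by (intro continuous_on_Phi_comp[OF k continuous_on_xfix[OF k d_lbd(1) M ends]]) force
  moreover have "0 < Phi_star k (d_lbd k)"
    using xfix[of "d_lbd k"] d_lbd Phi_d_lbd_pos[OF k] by (simp add: Phi_star_def)
  moreover have "Phi_star k (d_ubd k) < 0"
    using xfix[of "d_ubd k"] d_lbd Phi_d_ubd_neg[OF k] by (simp add: Phi_star_def)
  ultimately show ?thesis by blast
qed

end
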